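(* If $Q \subset M_\mathbb{R}$ is a lattice polytope that is not $2$-normal, then $\Sigma_Q$ is a proper subset of $P_Q$.
   Context: Let $M$ be an $m$-dimensional affine lattice, $M_\mathbb{R}:=M\otimes_\mathbb{Z}\mathbb{R}$, and $\mathbb{R}[M]$ the group ring (Laurent polynomials). For $f=\sum c_{\mathbf u}z^{\mathbf u}$, $\operatorname{New}(f):=\operatorname{conv}\{\mathbf u: c_{\mathbf u}\ne 0\}$, and $f\ge 0$ means $f$ is nonnegative at every real point of the torus $T=\operatorname{Spec}(\mathbb{R}[M])$. For an $m$-dimensional lattice polytope $Q\subset M_\mathbb{R}$, set $P_Q:=\{f\in\mathbb{R}[M]: \operatorname{New}(f)\subseteq 2Q,\ f\ge 0\}$ and $\Sigma_Q:=\{f = g_1^2+\dotsb+g_k^2 : g_j\in\mathbb{R}[M],\ \operatorname{New}(g_j)\subseteq Q\}$. $Q$ is $2$-normal if every lattice point of $2Q$ is a sum of two lattice points of $Q$. *)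

theory Defs
  imports "HOL-Analysis.Analysis"
begin

text \<open>The affine lattice M is identified with int^'n (m = CARD('n)), and
M_R with real^'n. A Laurent polynomial in R[M] is a finitely supported
coefficient function int^'n => real.\<close>

definition laurent :: "(int^'n \<Rightarrow> real) set" where
  "laurent = {c. finite {u. c u \<noteq> 0}}"

definition lsupp :: "(int^'n \<Rightarrow> real) \<Rightarrow> (int^'n) set" where
  "lsupp c = {u. c u \<noteq> 0}"

definition lat_pt :: "int^'n \<Rightarrow> real^'n" where
  "lat_pt u = (\<chi> i. real_of_int (u $ i))"

definition newton :: "(int^'n \<Rightarrow> real) \<Rightarrow> (real^'n) set" where
  "newton c = convex hull (lat_pt ` lsupp c)"

text \<open>Evaluation at a point of the real torus (all coordinates nonzero).\<close>
definition leval :: "(int^'n \<Rightarrow> real) \<Rightarrow> real^'n \<Rightarrow> real" where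
  "leval c x = (\<Sum>u\<in>lsupp c. c u * (\<Prod>i\<in>UNIV. (x $ i) powi (u $ i)))"

definition lnonneg :: "(int^'n \<Rightarrow> real) \<Rightarrow> bool" where
  "lnonneg c \<longleftrightarrow> (\<forall>x::real^'n. (\<forall>i. x $ i \<noteq> 0) \<longrightarrow> 0 \<le> leval c x)"

definition lmult :: "(int^'n \<Rightarrow> real) \<Rightarrow> (int^'n \<Rightarrow> real) \<Rightarrow> (int^'n \<Rightarrow> real)" where
  "lmult g h = (\<lambda>u. \<Sum>v\<in>lsupp g. g v * h (u - v))"

definition lattice_polytope :: "(real^'n) set \<Rightarrow> bool" where
  "lattice_polytope Q \<longleftrightarrow> (\<exists>S. finite S \<and> S \<subseteq> range lat_pt \<and> Q = convex hull S)"

definition PQ :: "(real^'n) set \<Rightarrow> (int^'n \<Rightarrow> real) set" where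
  "PQ Q = {f \<in> laurent. newton f \<subseteq> (\<lambda>x. (2::real) *\<^sub>R x) ` Q \<and> lnonneg f}"

definition SigmaQ :: "(real^'n) set \<Rightarrow> (int^'n \<Rightarrow> real) set" where
  "SigmaQ Q = {f. \<exists>(k::nat) (g::nat \<Rightarrow> int^'n \<Rightarrow> real).
      (\<forall>j<k. g j \<in> laurent \<and> newton (g j) \<subseteq> Q) \<and>
      f = (\<lambda>u. \<Sum>j<k. lmult (g j) (g j) u)}"

definition two_normal :: "(real^'n) set \<Rightarrow> bool" where
  "two_normal Q \<longleftrightarrow> (\<forall>u. lat_pt u \<in> (\<lambda>x. (2::real) *\<^sub>R x) ` Q \<longrightarrow>
      (\<exists>v w. lat_pt v \<in> Q \<and> lat_pt w \<in> Q \<and> u = v + w))"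

end

theory Submission
  imports Defs
begin

text \<open>Since \<open>Q\<close> is not 2-normal, some lattice point \<open>u\<close> of \<open>2Q\<close> is not a sum of two lattice
points of \<open>Q\<close>. Writing \<open>u = \<Sum> \<mu>\<^sub>w (2w)\<close> as a convex combination of doubled lattice points \<open>w\<close> of \<open>Q\<close>,
the weighted AM-GM inequality gives \<open>|z\<^sup>u| \<le> \<Sum> \<mu>\<^sub>w z\<^sup>2\<^sup>w\<close> on the real torus, so
\<open>f = \<Sum> \<mu>\<^sub>w z\<^sup>2\<^sup>w + z\<^sup>u\<close> lies in \<open>P\<^sub>Q\<close>. But in a sum of squares of polynomials supported in \<open>Q\<close>
every monomial \<open>z\<^sup>t\<close> with nonzero coefficient has \<open>t\<close> a sum of two lattice points of \<open>Q\<close>,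
so \<open>f \<notin> \<Sigma>\<^sub>Q\<close>.\<close>

definition lmonom :: "real^'n \<Rightarrow> int^'n \<Rightarrow> real" where
  "lmonom x u = (\<Prod>i\<in>UNIV. (x $ i) powi (u $ i))"

definition lterm :: "real \<Rightarrow> int^'n \<Rightarrow> int^'n \<Rightarrow> real" where
  "lterm a v = (\<lambda>t. if t = v then a else 0)"

lemma laurent_iff_finite_lsupp: "c \<in> laurent \<longleftrightarrow> finite (lsupp c)"
  by (simp add: laurent_def lsupp_def)

lemma leval_eq_sum:
  assumes "finite A" "lsupp c \<subseteq> A"
  shows "leval c x = (\<Sum>t\<in>A. c t * lmonom x t)"
  unfolding leval_def lmonom_def
  by (rule sum.mono_neutral_left) (use assms in \<open>auto simp: lsupp_def\<close>)

lemma lmonom_add: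
  assumes "\<forall>i. x $ i \<noteq> 0"
  shows "lmonom x (v + w) = lmonom x v * lmonom x w"
  using assms by (simp add: lmonom_def power_int_add prod.distrib)

lemma lat_pt_add: "lat_pt (v + w) = lat_pt v + lat_pt w"
  by (simp add: lat_pt_def vec_eq_iff)

lemma lat_pt_mult_2: "lat_pt (2 * w) = 2 *\<^sub>R lat_pt w"
  by (simp add: lat_pt_def vec_eq_iff)

lemma lmonom_mult_2:
  assumes "\<forall>i. x $ i \<noteq> 0"
  shows "lmonom x (2 * w) = (lmonom x w)\<^sup>2"
  using lmonom_add[OF assms, of w w] by (simp only: mult_2 power2_eq_square)

lemma inj_lat_pt: "inj lat_pt"
  by (auto simp: inj_def lat_pt_def vec_eq_iff)

lemma lsupp_sum: "lsupp (\<lambda>t. \<Sum>i\<in>I. F i t) \<subseteq> (\<Union>i\<in>I. lsupp (F i))"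
  by (auto simp: lsupp_def intro: ccontr)

lemma laurent_sum:
  assumes "finite I" "\<And>i. i \<in> I \<Longrightarrow> F i \<in> laurent"
  shows "(\<lambda>t. \<Sum>i\<in>I. F i t) \<in> laurent"
  using assms by (auto simp: laurent_iff_finite_lsupp intro: finite_subset[OF lsupp_sum])

lemma leval_sum:
  assumes "finite I" "\<And>i. i \<in> I \<Longrightarrow> F i \<in> laurent"
  shows "leval (\<lambda>t. \<Sum>i\<in>I. F i t) x = (\<Sum>i\<in>I. leval (F i) x)"
proof -
  define A where "A = (\<Union>i\<in>I. lsupp (F i))"
  have "finite A"
    using assms by (auto simp: A_def laurent_iff_finite_lsupp)
  have "leval (\<lambda>t. \<Sum>i\<in>I. F i t) x = (\<Sum>t\<in>A. (\<Sum>i\<in>I. F i t) * lmonom x t)"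
    by (rule leval_eq_sum[OF \<open>finite A\<close>]) (unfold A_def, rule lsupp_sum)
  also have "\<dots> = (\<Sum>i\<in>I. \<Sum>t\<in>A. F i t * lmonom x t)"
    by (simp add: sum_distrib_right) (rule sum.swap)
  also have "\<dots> = (\<Sum>i\<in>I. leval (F i) x)"
    using \<open>finite A\<close> by (intro sum.cong refl leval_eq_sum[symmetric]) (auto simp: A_def)
  finally show ?thesis .
qed

lemma lsupp_add: "lsupp (\<lambda>t. g t + h t) \<subseteq> lsupp g \<union> lsupp h"
  by (auto simp: lsupp_def)

lemma leval_add:
  assumes "g \<in> laurent" "h \<in> laurent"
  shows "leval (\<lambda>t. g t + h t) x = leval g x + leval h x"
proof -
  let ?A = "lsupp g \<union> lsupp h"
  have "finite ?A" using assms by (simp add: laurent_iff_finite_lsupp)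
  then show ?thesis
    using lsupp_add[of g h]
    by (simp add: leval_eq_sum[of ?A] distrib_right sum.distrib)
qed

lemma lsupp_lterm: "lsupp (lterm a v) \<subseteq> {v}"
  by (auto simp: lsupp_def lterm_def)

lemma lterm_laurent: "lterm a v \<in> laurent"
  using finite_subset[OF lsupp_lterm] by (simp add: laurent_iff_finite_lsupp)

lemma leval_lterm: "leval (lterm a v) x = a * lmonom x v"
  by (simp add: leval_eq_sum[of "{v}" "lterm a v"] lsupp_lterm, simp add: lterm_def)

lemma lsupp_lmult: "lsupp (lmult g h) \<subseteq> {v + w |v w. v \<in> lsupp g \<and> w \<in> lsupp h}"
proof
  fix u assume "u \<in> lsupp (lmult g h)"
  then have "(\<Sum>v\<in>lsupp g. g v * h (u - v)) \<noteq> 0"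
    by (simp add: lsupp_def lmult_def)
  then obtain v where v: "v \<in> lsupp g" "g v * h (u - v) \<noteq> 0"
    by (meson sum.neutral)
  then have "u - v \<in> lsupp h" by (simp add: lsupp_def)
  with v(1) show "u \<in> {v + w |v w. v \<in> lsupp g \<and> w \<in> lsupp h}"
    by force
qed

lemma lmult_laurent:
  assumes "g \<in> laurent" "h \<in> laurent"
  shows "lmult g h \<in> laurent"
  using assms
  by (auto simp: laurent_iff_finite_lsupp finite_image_set2 intro: finite_subset[OF lsupp_lmult])

lemma leval_lmult:
  assumes g: "g \<in> laurent" and h: "h \<in> laurent" and x: "\<forall>i. x $ i \<noteq> 0"
  shows "leval (lmult g h) x = leval g x * leval h x"
proof -
  define G where "G = lsupp g"
  define H where "H = lsupp h"
  define A where "A = {v + w |v w. v \<in> G \<and> w \<in> H}"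
  have "finite G" "finite H" using g h by (auto simp: G_def H_def laurent_iff_finite_lsupp)
  then have "finite A" by (simp add: A_def finite_image_set2)
  have shifted: "(\<Sum>t\<in>A. h (t - v) * lmonom x t) = lmonom x v * leval h x" if "v \<in> G" for v
  proof -
    have "(\<Sum>t\<in>A. h (t - v) * lmonom x t) = (\<Sum>t\<in>(+) v ` H. h (t - v) * lmonom x t)"
      using \<open>finite A\<close> \<open>v \<in> G\<close>
      by (intro sum.mono_neutral_right)
        (auto simp: A_def H_def lsupp_def image_iff, metis add.commute diff_add_cancel)
    also have "\<dots> = (\<Sum>w\<in>H. h w * lmonom x (v + w))"
      by (subst sum.reindex) auto
    also have "\<dots> = lmonom x v * leval h x"
      using \<open>finite H\<close>
      by (simp add: lmonom_add[OF x] leval_eq_sum H_def sum_distrib_left algebra_simps)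
    finally show ?thesis .
  qed
  have "leval (lmult g h) x = (\<Sum>t\<in>A. lmult g h t * lmonom x t)"
    by (rule leval_eq_sum[OF \<open>finite A\<close>]) (unfold A_def G_def H_def, rule lsupp_lmult)
  also have "\<dots> = (\<Sum>v\<in>G. g v * (\<Sum>t\<in>A. h (t - v) * lmonom x t))"
    by (simp add: lmult_def G_def sum_distrib_right sum_distrib_left mult.assoc)
      (rule sum.swap)
  also have "\<dots> = (\<Sum>v\<in>G. g v * lmonom x v * leval h x)"
    by (simp add: shifted mult.assoc)
  also have "\<dots> = leval g x * leval h x"
    using \<open>finite G\<close> by (simp add: leval_eq_sum G_def sum_distrib_right mult.assoc)
  finally show ?thesis .
qed

lemma newton_subset: "lat_pt ` lsupp c \<subseteq> D \<Longrightarrow> convex D \<Longrightarrow> newton c \<subseteq> D"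
  by (simp add: newton_def hull_minimal)

lemma lat_pt_in_newton: "v \<in> lsupp c \<Longrightarrow> lat_pt v \<in> newton c"
  by (simp add: newton_def hull_inc)

lemma add_mem_scaleR_2_image:
  assumes "convex Q" "a \<in> Q" "b \<in> Q"
  shows "a + b \<in> (\<lambda>x. (2::real) *\<^sub>R x) ` Q"
proof -
  have "(1/2) *\<^sub>R a + (1/2) *\<^sub>R b \<in> Q"
    using assms by (intro convexD) auto
  moreover have "a + b = 2 *\<^sub>R ((1/2) *\<^sub>R a + (1/2) *\<^sub>R b)"
    by (simp add: scaleR_add_right)
  ultimately show ?thesis by blast
qed

subsection \<open>Sums of squares\<close>

lemma SigmaQE:
  assumes "f \<in> SigmaQ Q"
  obtains k :: nat and g
  where "\<And>j. j < k \<Longrightarrow> g j \<in> laurent" "\<And>j. j < k \<Longrightarrow> newton (g j) \<subseteq> Q"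
    "f = (\<lambda>u. \<Sum>j<k. lmult (g j) (g j) u)"
  using assms unfolding SigmaQ_def by blast

lemma SigmaQ_subset_PQ:
  assumes "convex Q"
  shows "SigmaQ Q \<subseteq> PQ Q"
proof
  fix f assume "f \<in> SigmaQ Q"
  then obtain k :: nat and g where g: "\<And>j. j < k \<Longrightarrow> g j \<in> laurent" "\<And>j. j < k \<Longrightarrow> newton (g j) \<subseteq> Q"
    and f: "f = (\<lambda>u. \<Sum>j<k. lmult (g j) (g j) u)"
    by (elim SigmaQE) blast
  have squares: "lmult (g j) (g j) \<in> laurent" if "j < k" for j
    using g(1) that by (simp add: lmult_laurent)
  then have "f \<in> laurent"
    unfolding f by (intro laurent_sum) auto
  have "lat_pt u \<in> (\<lambda>x. (2::real) *\<^sub>R x) ` Q" if "u \<in> lsupp f" for u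
  proof -
    obtain j where "j < k" and u: "u \<in> lsupp (lmult (g j) (g j))"
      using subsetD[OF lsupp_sum \<open>u \<in> lsupp f\<close>[unfolded f]] by blast
    then obtain v w where "v \<in> lsupp (g j)" "w \<in> lsupp (g j)" "u = v + w"
      using subsetD[OF lsupp_lmult u] by blast
    with g(2)[OF \<open>j < k\<close>] lat_pt_in_newton have "lat_pt v \<in> Q" "lat_pt w \<in> Q"
      by blast+
    with \<open>u = v + w\<close> show ?thesis
      by (simp add: lat_pt_add add_mem_scaleR_2_image[OF assms])
  qed
  then have "newton f \<subseteq> (\<lambda>x. (2::real) *\<^sub>R x) ` Q"
    using assms by (intro newton_subset convex_scaling) auto
  moreover have "lnonneg f"
    unfolding lnonneg_def
  proof (intro allI impI)
    fix x :: "real^'a" assume x: "\<forall>i. x $ i \<noteq> 0"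
    have "leval f x = (\<Sum>j<k. leval (lmult (g j) (g j)) x)"
      unfolding f by (rule leval_sum) (simp_all add: squares)
    also have "\<dots> = (\<Sum>j<k. (leval (g j) x)\<^sup>2)"
      using g(1) x by (simp add: leval_lmult power2_eq_square)
    finally show "0 \<le> leval f x" by (simp add: sum_nonneg)
  qed
  ultimately show "f \<in> PQ Q" using \<open>f \<in> laurent\<close> by (simp add: PQ_def)
qed

lemma SigmaQ_coeff_eq_0:
  assumes "f \<in> SigmaQ Q"
    and not_sum: "\<And>v w. lat_pt v \<in> Q \<Longrightarrow> lat_pt w \<in> Q \<Longrightarrow> u \<noteq> v + w"
  shows "f u = 0"
proof -
  obtain k :: nat and g where g: "\<And>j. j < k \<Longrightarrow> newton (g j) \<subseteq> Q"
    and f: "f = (\<lambda>u. \<Sum>j<k. lmult (g j) (g j) u)"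
    using assms(1) by (elim SigmaQE) blast
  have "u \<notin> lsupp (lmult (g j) (g j))" if "j < k" for j
  proof
    assume u: "u \<in> lsupp (lmult (g j) (g j))"
    then obtain v w where "v \<in> lsupp (g j)" "w \<in> lsupp (g j)" "u = v + w"
      using subsetD[OF lsupp_lmult u] by blast
    with g[OF \<open>j < k\<close>] lat_pt_in_newton not_sum show False
      by blast
  qed
  then show ?thesis by (simp add: f lsupp_def)
qed

subsection \<open>A nonnegative polynomial that is not a sum of squares\<close>

lemma abs_lmonom_eq_exp_inner:
  assumes "\<forall>i. x $ i \<noteq> 0"
  shows "\<bar>lmonom x w\<bar> = exp (lat_pt w \<bullet> (\<chi> i. ln \<bar>x $ i\<bar>))"
proof -
  have "\<bar>lmonom x w\<bar> = (\<Prod>i\<in>UNIV. \<bar>x $ i\<bar> powr real_of_int (w $ i))"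
    using assms by (simp add: lmonom_def abs_prod power_int_abs powr_real_of_int')
  also have "\<dots> = exp (lat_pt w \<bullet> (\<chi> i. ln \<bar>x $ i\<bar>))"
    using assms by (simp add: powr_def inner_vec_def lat_pt_def exp_sum mult.commute)
  finally show ?thesis .
qed

text \<open>Weighted AM-GM, in the form of convexity of \<open>exp\<close> in logarithmic coordinates.\<close>
lemma abs_lmonom_le_convex_comb:
  fixes x :: "real^'n"
  assumes x: "\<forall>i. x $ i \<noteq> 0" and "finite L"
    and mu_nonneg: "\<And>w. w \<in> L \<Longrightarrow> 0 \<le> mu w" and mu_sum: "sum mu L = 1"
    and comb: "lat_pt u = (\<Sum>w\<in>L. mu w *\<^sub>R lat_pt (v w))"
  shows "\<bar>lmonom x u\<bar> \<le> (\<Sum>w\<in>L. mu w * \<bar>lmonom x (v w)\<bar>)"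
proof -
  define y :: "real^'n" where "y = (\<chi> i. ln \<bar>x $ i\<bar>)"
  have "L \<noteq> {}" using mu_sum by auto
  have "\<bar>lmonom x u\<bar> = exp (\<Sum>w\<in>L. mu w *\<^sub>R (lat_pt (v w) \<bullet> y))"
    by (simp add: abs_lmonom_eq_exp_inner[OF x] comb inner_sum_left y_def)
  also have "\<dots> \<le> (\<Sum>w\<in>L. mu w * exp (lat_pt (v w) \<bullet> y))"
    using \<open>finite L\<close> \<open>L \<noteq> {}\<close> exp_convex mu_sum mu_nonneg by (rule convex_on_sum) auto
  also have "\<dots> = (\<Sum>w\<in>L. mu w * \<bar>lmonom x (v w)\<bar>)"
    by (simp add: abs_lmonom_eq_exp_inner[OF x] y_def)
  finally show ?thesis .
qed

lemma doubled_lattice_polytope_convex_comb: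
  assumes "lattice_polytope Q" "lat_pt u \<in> (\<lambda>x. (2::real) *\<^sub>R x) ` Q"
  obtains L mu where "finite L" "\<And>w. w \<in> L \<Longrightarrow> lat_pt w \<in> Q"
    "\<And>w. w \<in> L \<Longrightarrow> 0 \<le> mu w" "sum mu L = 1"
    "lat_pt u = (\<Sum>w\<in>L. mu w *\<^sub>R lat_pt (2 * w))"
proof -
  obtain S where "finite S" "S \<subseteq> range lat_pt" and Q: "Q = convex hull S"
    using assms(1) by (auto simp: lattice_polytope_def)
  define L where "L = lat_pt -` S"
  have S: "S = lat_pt ` L"
    using \<open>S \<subseteq> range lat_pt\<close> by (auto simp: L_def)
  have inj: "inj_on lat_pt L"
    using inj_lat_pt inj_on_subset by blast
  have "finite L"
    unfolding L_def using \<open>finite S\<close> inj_lat_pt by (rule finite_vimageI)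
  obtain q where "q \<in> Q" and u: "lat_pt u = 2 *\<^sub>R q"
    using assms(2) by blast
  then obtain lam where lam_nonneg: "\<forall>p\<in>S. 0 \<le> lam p" and "sum lam S = 1"
    and "(\<Sum>p\<in>S. lam p *\<^sub>R p) = q"
    using convex_hull_finite[OF \<open>finite S\<close>] Q by auto
  show ?thesis
  proof
    show "sum (lam \<circ> lat_pt) L = 1"
      using \<open>sum lam S = 1\<close> by (simp add: S sum.reindex[OF inj])
    show "lat_pt u = (\<Sum>w\<in>L. (lam \<circ> lat_pt) w *\<^sub>R lat_pt (2 * w))"
      unfolding lat_pt_mult_2 scaleR_left_commute[of _ 2] scaleR_sum_right[symmetric]
      using \<open>(\<Sum>p\<in>S. lam p *\<^sub>R p) = q\<close> by (simp add: u S sum.reindex[OF inj])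
  qed (use \<open>finite L\<close> lam_nonneg in \<open>auto simp: S Q hull_inc\<close>)
qed

definition circuit_poly :: "(int^'n) set \<Rightarrow> (int^'n \<Rightarrow> real) \<Rightarrow> int^'n \<Rightarrow> int^'n \<Rightarrow> real" where
  "circuit_poly L mu u = (\<lambda>t. (\<Sum>w\<in>L. lterm (mu w) (2 * w) t) + lterm 1 u t)"

lemma circuit_poly_apex:
  assumes "\<And>w. w \<in> L \<Longrightarrow> u \<noteq> 2 * w"
  shows "circuit_poly L mu u u = 1"
proof -
  have "(\<Sum>w\<in>L. lterm (mu w) (2 * w) u) = 0"
    using assms by (intro sum.neutral) (simp add: lterm_def)
  then show ?thesis by (simp add: circuit_poly_def lterm_def)
qed

lemma circuit_poly_in_PQ:
  fixes Q :: "(real^'n) set"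
  assumes "convex Q" "finite L" and L: "\<And>w. w \<in> L \<Longrightarrow> lat_pt w \<in> Q"
    and mu_nonneg: "\<And>w. w \<in> L \<Longrightarrow> 0 \<le> mu w" and mu_sum: "sum mu L = 1"
    and comb: "lat_pt u = (\<Sum>w\<in>L. mu w *\<^sub>R lat_pt (2 * w))"
  shows "circuit_poly L mu u \<in> PQ Q"
proof -
  let ?g = "\<lambda>t. \<Sum>w\<in>L. lterm (mu w) (2 * w) t"
  let ?f = "\<lambda>t. ?g t + lterm 1 u t"
  let ?D = "(\<lambda>x. (2::real) *\<^sub>R x) ` Q"
  have "?g \<in> laurent"
    using \<open>finite L\<close> by (intro laurent_sum lterm_laurent)
  have supp: "lsupp ?f \<subseteq> insert u ((\<lambda>w. 2 * w) ` L)"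
    using lsupp_add[of ?g "lterm 1 u"] lsupp_sum[of _ L] lsupp_lterm by fastforce
  then have "?f \<in> laurent"
    using \<open>finite L\<close> by (auto simp: laurent_iff_finite_lsupp intro: finite_subset)
  have "lat_pt (2 * w) \<in> ?D" if "w \<in> L" for w
    using L[OF that] by (simp add: lat_pt_mult_2)
  moreover have "lat_pt u \<in> ?D"
    using comb \<open>finite L\<close> mu_nonneg mu_sum calculation
    by (simp add: convex_sum convex_scaling[OF \<open>convex Q\<close>])
  ultimately have "newton ?f \<subseteq> ?D"
    using supp \<open>convex Q\<close> by (intro newton_subset convex_scaling) auto
  moreover have "lnonneg ?f"
    unfolding lnonneg_def
  proof (intro allI impI)
    fix x :: "real^'n" assume x: "\<forall>i. x $ i \<noteq> 0"
    have "\<bar>lmonom x u\<bar> \<le> (\<Sum>w\<in>L. mu w * \<bar>lmonom x (2 * w)\<bar>)"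
      using comb by (intro abs_lmonom_le_convex_comb[OF x \<open>finite L\<close> mu_nonneg mu_sum])
    also have "\<dots> = leval ?g x"
      using \<open>finite L\<close> by (simp add: leval_sum lterm_laurent leval_lterm lmonom_mult_2[OF x])
    finally show "0 \<le> leval ?f x"
      using \<open>?g \<in> laurent\<close> by (simp add: leval_add lterm_laurent leval_lterm)
  qed
  ultimately show ?thesis using \<open>?f \<in> laurent\<close> by (simp add: PQ_def circuit_poly_def)
qed

theorem lemma6p2:
  fixes Q :: "(real^'n) set"
  assumes "lattice_polytope Q"
    and "aff_dim Q = int CARD('n)"
    and "\<not> two_normal Q"
  shows "SigmaQ Q \<subset> PQ Q"
proof -
  have "convex Q"
    using assms(1) by (auto simp: lattice_polytope_def)
  obtain u where u: "lat_pt u \<in> (\<lambda>x. (2::real) *\<^sub>R x) ` Q"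
    and not_sum: "\<And>v w. lat_pt v \<in> Q \<Longrightarrow> lat_pt w \<in> Q \<Longrightarrow> u \<noteq> v + w"
    using assms(3) unfolding two_normal_def by blast
  obtain L mu where L: "finite L" "\<And>w. w \<in> L \<Longrightarrow> lat_pt w \<in> Q"
    and mu: "\<And>w. w \<in> L \<Longrightarrow> 0 \<le> mu w" "sum mu L = 1"
    and comb: "lat_pt u = (\<Sum>w\<in>L. mu w *\<^sub>R lat_pt (2 * w))"
    using doubled_lattice_polytope_convex_comb[OF assms(1) u] by blast
  have "circuit_poly L mu u \<in> PQ Q"
    using \<open>convex Q\<close> L mu comb by (rule circuit_poly_in_PQ)
  moreover have "u \<noteq> 2 * w" if "w \<in> L" for w
    using L(2)[OF that] not_sum[of w w] by (metis mult_2)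
  then have "circuit_poly L mu u u = 1"
    by (rule circuit_poly_apex)
  then have "circuit_poly L mu u \<notin> SigmaQ Q"
    using SigmaQ_coeff_eq_0 not_sum by force
  ultimately show ?thesis
    using SigmaQ_subset_PQ[OF \<open>convex Q\<close>] by blast
qed

end
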